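(* Let $f:\mathbb{R}^p\to\mathbb{R}$ be differentiable and suppose there exist $\gamma,\kappa>0$ such that for all $x,y\in\mathbb{R}^p$: $$f(x)\le f(y)\implies\langle\nabla f(y),x-y\rangle\le-\frac\gamma2\|x-y\|^2,$$ $$f(x)\le f(y)\implies\langle\nabla f(y),x-y\rangle\le\kappa(f(x)-f(y)).$$ Then for all $x,y\in\mathbb{R}^p$, $$f(x)\le f(y)\implies f(x)\ge f(y)+\frac2\kappa\langle\nabla f(y),x-y\rangle+\frac{\gamma}{2\kappa}\|x-y\|^2.$$ *)

theory Defs
  imports "HOL-Analysis.Analysis"
begin

end

theory Submission
  imports Defs
begin

lemma averaged_bound_le:
  fixes g N d \<gamma> \<kappa> :: real
  assumes "\<kappa> > 0" and "g \<le> - (\<gamma> / 2) * N" and "g \<le> \<kappa> * d"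
  shows "(2 / \<kappa>) * g + (\<gamma> / (2 * \<kappa>)) * N \<le> d"
proof -
  have "2 * g + (\<gamma> / 2) * N \<le> \<kappa> * d"
    using assms(2,3) by linarith
  then have "(2 * g + (\<gamma> / 2) * N) / \<kappa> \<le> d"
    using assms(1) by (simp add: divide_le_eq mult.commute)
  then show ?thesis
    using assms(1) by (simp add: field_simps)
qed

theorem proposition5p1:
  fixes f :: "real ^ 'p \<Rightarrow> real"
    and gradf :: "real ^ 'p \<Rightarrow> real ^ 'p"
    and \<gamma> \<kappa> :: real
  assumes grad: "\<And>x. (f has_derivative (\<lambda>h. gradf x \<bullet> h)) (at x)"
    and gpos: "\<gamma> > 0" and kpos: "\<kappa> > 0"
    and H1: "\<And>x y. f x \<le> f y \<Longrightarrow> gradf y \<bullet> (x - y) \<le> - (\<gamma> / 2) * (norm (x - y))\<^sup>2"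
    and H2: "\<And>x y. f x \<le> f y \<Longrightarrow> gradf y \<bullet> (x - y) \<le> \<kappa> * (f x - f y)"
  shows "\<And>x y. f x \<le> f y \<Longrightarrow>
    f x \<ge> f y + (2 / \<kappa>) * (gradf y \<bullet> (x - y)) + (\<gamma> / (2 * \<kappa>)) * (norm (x - y))\<^sup>2"
proof -
  fix x y
  assume "f x \<le> f y"
  then have "(2 / \<kappa>) * (gradf y \<bullet> (x - y)) + (\<gamma> / (2 * \<kappa>)) * (norm (x - y))\<^sup>2 \<le> f x - f y"
    using averaged_bound_le[OF kpos H1 H2] by blast
  then show "f x \<ge> f y + (2 / \<kappa>) * (gradf y \<bullet> (x - y)) + (\<gamma> / (2 * \<kappa>)) * (norm (x - y))\<^sup>2"
    by linarith
qed

end
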